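(* Let $m,n\ge0$, let $x=(x_1,\dots,x_m)$, $y=(y_1,\dots,y_n)$, and let $H_k(x,y)$ be as in the context. Then: (1) $H_k(x,y)=\sum_{j=0}^n(-1)^je_j(y)H_k'(x)$ with $H'_k(x):=H_{k-j}(x)$, i.e. $H_k(x,y)=\sum_{j=0}^n(-1)^je_j(y)H_{k-j}(x)$ for all $k\in\mathbb Z$, where $H_{k}(x)$ is the element for $n=0$ and $e_j(y)$ is the $j$-th elementary symmetric polynomial in $y$; (2) for all $k\in\mathbb Z$, $H_k(x,y)\Delta_m(x)\Delta_n(y)=\sum_{(\sigma,\tau)\in S_m\times S_n}\mathrm{sgn}(\sigma)\mathrm{sgn}(\tau)(\sigma,\tau)\Big(\prod_{j=1}^n\big(1-\tfrac{y_j}{x_1}\big)x_1^{k}x_1^{m-1}x_2^{m-2}\cdots x_m^0\,y_1^{n-1}\cdots y_n^0\Big)$, where $S_m$ permutes the $x$'s and $S_n$ the $y$'s; (3) for $m\ge1$ and all $k\in\mathbb Z$, $H_k(x,y)-x_1H_{k-1}(x,y)=H_k(x_2,\dots,x_m,y)$; (4) if $m=1$, then $H_k(x_1,y)-x_1H_{k-1}(x_1,y)=0$ for all $k\in\mathbb Z$; (5) for every sequence of integers $\lambda_1,\dots,\lambda_m$, $\det\big(H_{\lambda_i-i+j}(x,y)\big)_{1\le i,j\le m}=\prod_{i=1}^m\prod_{j=1}^n\big(1-\tfrac{y_j}{x_i}\big)E_\lambda(x_1,\dots,x_m)$; (6) for every sequence of integers $\lambda_1,\dots,\lambda_{m+1}$,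 $\det\big(H_{\lambda_i-i+j}(x,y)\big)_{1\le i,j\le m+1}=0$.
   Context: Define $h_k=h_k(x,y)$ and $h_k^{(\infty)}$ by the expansions at $t=0$ and at $t=\infty$: $\frac{\prod_{j=1}^n(1-y_jt)}{\prod_{i=1}^m(1-x_it)}=\sum_{k\ge0}h_kt^k=\sum_{k\le n-m}h^{(\infty)}_kt^k$, with $h_k=0$ for $k<0$ and $h^{(\infty)}_k=0$ for $k>n-m$. Set $H_k(x,y)=h_k-h_k^{(\infty)}$ for $k\in\mathbb Z$. $\Delta_m(x)=\prod_{i<j}(x_i-x_j)$, $\Delta_n(y)=\prod_{i<j}(y_i-y_j)$. For integers $\lambda_1,\dots,\lambda_m$, $E_\lambda(x)$ is defined by $E_\lambda(x)\Delta_m(x)=\sum_{\sigma\in S_m}\mathrm{sgn}(\sigma)\sigma(x_1^{\lambda_1+m-1}\cdots x_m^{\lambda_m})$. *)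

theory Defs
  imports "Jordan_Normal_Form.Determinant" "HOL-Computational_Algebra.Formal_Power_Series"
begin

text \<open>Points: x = [x_1,...,x_m], y = [y_1,...,y_n] are lists of field elements (0-based).
  Expansion at t = 0: coefficients of the formal power series prod(1 - y_j t)/prod(1 - x_i t).
  Expansion at t = infinity: with s = 1/t the function equals s^(m-n) * G(s), where
  G(s) = prod(s - y_j)/prod(s - x_i) is expanded as a power series in s (requires x_i nonzero);
  hence the coefficient of t^k is the coefficient of s^(n-m-k) of G.\<close>

definition h0 :: "'a::field list \<Rightarrow> 'a list \<Rightarrow> int \<Rightarrow> 'a" where
  "h0 x y k = (if k < 0 then 0 else
     fps_nth (prod_list (map (\<lambda>b. 1 - fps_const b * fps_X) y)
              * inverse (prod_list (map (\<lambda>a. 1 - fps_const a * fps_X) x))) (nat k))"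

definition hinf :: "'a::field list \<Rightarrow> 'a list \<Rightarrow> int \<Rightarrow> 'a" where
  "hinf x y k = (if k > int (length y) - int (length x) then 0 else
     fps_nth (prod_list (map (\<lambda>b. fps_X - fps_const b) y)
              * inverse (prod_list (map (\<lambda>a. fps_X - fps_const a) x)))
             (nat (int (length y) - int (length x) - k)))"

definition HH :: "'a::field list \<Rightarrow> 'a list \<Rightarrow> int \<Rightarrow> 'a" where
  "HH x y k = h0 x y k - hinf x y k"

definition esym :: "nat \<Rightarrow> 'a::field list \<Rightarrow> 'a" where
  "esym j y = (\<Sum>S\<in>{S. S \<subseteq> {..<length y} \<and> card S = j}. \<Prod>i\<in>S. y ! i)"

definition vdm :: "'a::field list \<Rightarrow> 'a" where
  "vdm x = (\<Prod>i<length x. \<Prod>j\<in>{i<..<length x}. x ! i - x ! j)"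

text \<open>Alternant sum_sigma sgn(sigma) sigma(x_1^(lam_1+m-1) ... x_m^(lam_m)) and
  E_lam = alternant / Delta (meaningful for distinct x).\<close>
definition alt :: "int list \<Rightarrow> 'a::field list \<Rightarrow> 'a" where
  "alt lam x = (\<Sum>\<sigma> | \<sigma> permutes {..<length x}. of_int (sign \<sigma>) *
      (\<Prod>i<length x. (x ! (\<sigma> i)) powi (lam ! i + int (length x) - 1 - int i)))"

definition Elam :: "int list \<Rightarrow> 'a::field list \<Rightarrow> 'a" where
  "Elam lam x = alt lam x / vdm x"

end

theory Submission
  imports Defs
begin

text \<open>Multiplying the generating function by 1 - x_1 t, respectively by t - x_1 at infinity,
  shows H_k(x,y) - x_1 H_(k-1)(x,y) = H_k(x_2,...,x_m,y), and expanding the product of the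
  1 - y_j t gives the expansion in the e_j(y). For distinct nonzero x the recurrence, applied with
  two different leading variables, identifies H_k(x) with the partial-fraction sum of
  x_i^(k+m-1) / prod_(j<>i) (x_i - x_j); hence H_k(x,y) is the same sum weighted by
  prod_j (1 - y_j/x_i). This factors the matrices in (2) and (5) as a matrix of powers of the x_i
  times the matrix (prod_j (1 - y_j/x_a) x_a^j / prod_(b<>a) (x_a - x_b))_(a,j), whose
  determinant is read off from the Vandermonde case; for repeated x both sides of (2) vanish.
  For (6), the coefficients of prod_i (t - x_i) lie in the kernel: applying the recurrence m times
  reduces the relevant combination to H_k of the empty x, which is 0.\<close>

section \<open>The recurrence in x and the expansion in y\<close>

abbreviation one_minus_prod :: "'a::field list \<Rightarrow> 'a fps" where
  "one_minus_prod z \<equiv> prod_list (map (\<lambda>b. 1 - fps_const b * fps_X) z)"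

abbreviation X_minus_prod :: "'a::field list \<Rightarrow> 'a fps" where
  "X_minus_prod z \<equiv> prod_list (map (\<lambda>b. fps_X - fps_const b) z)"

lemma fps_mult_inverse_mult_cancel:
  fixes u F G :: "'a::field fps"
  assumes "fps_nth u 0 \<noteq> 0"
  shows "u * (F * inverse (u * G)) = F * inverse G"
proof -
  have "u * inverse u = 1" using assms by (rule inverse_mult_eq_1')
  then show ?thesis by (simp add: fps_inverse_mult mult.left_commute)
qed

lemma h0_Cons: "h0 (a # x) y k - a * h0 (a # x) y (k - 1) = h0 x y k"
proof -
  define F where "F = one_minus_prod y * inverse (one_minus_prod (a # x))"
  have "one_minus_prod y * inverse (one_minus_prod x) = (1 - fps_const a * fps_X) * F"
    by (simp add: F_def fps_mult_inverse_mult_cancel)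
  also have "\<dots> = F - fps_const a * (fps_X * F)" by (simp add: algebra_simps)
  finally have coeff: "fps_nth (one_minus_prod y * inverse (one_minus_prod x)) n
      = fps_nth F n - (if n = 0 then 0 else a * fps_nth F (n - 1))" for n
    by simp
  consider "k < 0" | "k = 0" | "k > 0" by linarith
  then show ?thesis
  proof cases
    case 3
    then have "nat (k - 1) = nat k - 1" "nat k \<noteq> 0" by auto
    then show ?thesis using coeff[of "nat k"] 3 by (simp add: h0_def F_def)
  qed (use coeff[of 0] in \<open>auto simp: h0_def F_def\<close>)
qed

lemma hinf_Cons:
  assumes "a \<noteq> 0"
  shows "hinf (a # x) y k - a * hinf (a # x) y (k - 1) = hinf x y k"
proof -
  define G where "G = X_minus_prod y * inverse (X_minus_prod (a # x))"
  define N where "N = int (length y) - int (length x)"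
  have "X_minus_prod y * inverse (X_minus_prod x) = (fps_X - fps_const a) * G"
    using assms by (simp add: G_def fps_mult_inverse_mult_cancel)
  also have "\<dots> = fps_X * G - fps_const a * G" by (simp add: algebra_simps)
  finally have coeff: "fps_nth (X_minus_prod y * inverse (X_minus_prod x)) n
      = (if n = 0 then 0 else fps_nth G (n - 1)) - a * fps_nth G n" for n
    by simp
  have len: "int (length y) - int (length (a # x)) = N - 1" by (simp add: N_def)
  have hinf_ax: "hinf (a # x) y j = (if j > N - 1 then 0 else fps_nth G (nat (N - 1 - j)))" for j
    unfolding hinf_def len G_def ..
  have hinf_x: "hinf x y j = (if j > N then 0
      else fps_nth (X_minus_prod y * inverse (X_minus_prod x)) (nat (N - j)))" for j
    unfolding hinf_def N_def ..
  consider "k > N" | "k = N" | "k < N" by linarith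
  then show ?thesis
  proof cases
    case 3
    then have "nat (N - k) \<noteq> 0" "nat (N - 1 - (k - 1)) = nat (N - k)"
        "nat (N - 1 - k) = nat (N - k) - 1" by auto
    then show ?thesis using coeff[of "nat (N - k)"] 3 by (simp add: hinf_ax hinf_x)
  qed (use coeff[of 0] in \<open>auto simp: hinf_ax hinf_x\<close>)
qed

lemma HH_Cons:
  assumes "a \<noteq> 0"
  shows "HH (a # x) y k - a * HH (a # x) y (k - 1) = HH x y k"
  using h0_Cons[of a x y k] hinf_Cons[OF assms, of x y k] by (simp add: HH_def algebra_simps)

lemma prod_diff_mult_expand:
  fixes u v :: "'b::comm_ring_1"
  assumes A: "finite A"
  shows "(\<Prod>i\<in>A. u - v * g i)
       = (\<Sum>j\<le>card A. (-1)^j * (\<Sum>S | S \<subseteq> A \<and> card S = j. \<Prod>i\<in>S. g i) * v^j * u^(card A - j))"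
proof -
  have "(\<Prod>i\<in>A. u - v * g i) = (\<Prod>i\<in>A. (- v * g i) + u)" by simp
  also have "\<dots> = (\<Sum>S\<in>Pow A. (\<Prod>i\<in>S. - v * g i) * (\<Prod>i\<in>A - S. u))"
    using A by (rule prod_add)
  also have "\<dots> = (\<Sum>S\<in>Pow A. (-1)^card S * (\<Prod>i\<in>S. g i) * v^card S * u^(card A - card S))"
  proof (rule sum.cong[OF refl])
    fix S assume "S \<in> Pow A"
    then have "finite S" "card (A - S) = card A - card S"
      using A by (auto intro: finite_subset card_Diff_subset)
    moreover have "(\<Prod>i\<in>S. - v * g i) = (-1)^card S * v^card S * (\<Prod>i\<in>S. g i)"
      by (subst prod.distrib) (simp add: power_minus[of v])
    ultimately show "(\<Prod>i\<in>S. - v * g i) * (\<Prod>i\<in>A - S. u)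
        = (-1)^card S * (\<Prod>i\<in>S. g i) * v^card S * u^(card A - card S)"
      by (simp add: ac_simps)
  qed
  also have "\<dots> = (\<Sum>j\<le>card A. \<Sum>S | S \<in> Pow A \<and> card S = j.
      (-1)^card S * (\<Prod>i\<in>S. g i) * v^card S * u^(card A - card S))"
    using A by (intro sum.group[symmetric]) (auto intro: card_mono)
  also have "\<dots> = (\<Sum>j\<le>card A. (-1)^j * (\<Sum>S | S \<subseteq> A \<and> card S = j. \<Prod>i\<in>S. g i) * v^j * u^(card A - j))"
    by (intro sum.cong refl) (simp add: sum_distrib_left sum_distrib_right ac_simps)
  finally show ?thesis .
qed

lemma fps_const_sum: "fps_const (sum f A) = (\<Sum>a\<in>A. fps_const (f a))"
  by (induct A rule: infinite_finite_induct) (simp_all flip: fps_const_add)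

lemma fps_const_prod: "fps_const (prod f A) = (\<Prod>a\<in>A. fps_const (f a))"
  by (induct A rule: infinite_finite_induct) (simp_all flip: fps_const_mult)

lemma prod_list_map_conv_prod_nth: "prod_list (map f y) = (\<Prod>i<length y. f (y ! i))"
  by (induct y) (simp_all add: prod.lessThan_Suc_shift del: prod.lessThan_Suc)

lemma fps_const_neg_one_power_mult: "fps_const ((-1)^j * c) = (-1)^j * fps_const (c :: 'a::field)"
  by (induct j) (simp_all flip: fps_const_neg)

lemma one_minus_prod_esym:
  "one_minus_prod y = (\<Sum>j\<le>length y. fps_const ((-1)^j * esym j y) * fps_X^j)"
proof -
  have "one_minus_prod y = (\<Prod>i<length y. 1 - fps_X * fps_const (y ! i))"
    by (simp add: prod_list_map_conv_prod_nth ac_simps)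
  also have "\<dots> = (\<Sum>j\<le>length y. fps_const ((-1)^j * esym j y) * fps_X^j)"
    by (simp add: prod_diff_mult_expand esym_def fps_const_neg_one_power_mult fps_const_sum fps_const_prod ac_simps)
  finally show ?thesis .
qed

lemma X_minus_prod_esym:
  "X_minus_prod y = (\<Sum>j\<le>length y. fps_const ((-1)^j * esym j y) * fps_X^(length y - j))"
proof -
  have "X_minus_prod y = (\<Prod>i<length y. fps_X - 1 * fps_const (y ! i))"
    by (simp add: prod_list_map_conv_prod_nth)
  also have "\<dots> = (\<Sum>j\<le>length y. fps_const ((-1)^j * esym j y) * fps_X^(length y - j))"
    unfolding prod_diff_mult_expand[OF finite_lessThan]
    by (simp add: esym_def fps_const_neg_one_power_mult fps_const_sum fps_const_prod ac_simps)
  finally show ?thesis .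
qed

lemma prod_one_minus_div_esym:
  "(\<Prod>j<length y. 1 - y ! j / u) = (\<Sum>j\<le>length y. (-1)^j * esym j y * inverse u ^ j)"
proof -
  have "(\<Prod>j<length y. 1 - y ! j / u) = (\<Prod>j<length y. 1 - inverse u * y ! j)"
    by (simp add: divide_inverse ac_simps)
  then show ?thesis by (simp add: prod_diff_mult_expand esym_def)
qed

lemma h0_esym: "h0 x y k = (\<Sum>j\<le>length y. (-1)^j * esym j y * h0 x [] (k - int j))"
proof (cases "k < 0")
  case False
  let ?I = "inverse (one_minus_prod x)"
  have "h0 x y k = fps_nth (one_minus_prod y * ?I) (nat k)" using False by (simp add: h0_def)
  also have "\<dots> = (\<Sum>j\<le>length y. fps_nth (fps_const ((-1)^j * esym j y) * (fps_X^j * ?I)) (nat k))"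
    by (simp add: one_minus_prod_esym sum_distrib_right fps_sum_nth mult.assoc)
  also have "\<dots> = (\<Sum>j\<le>length y. (-1)^j * esym j y * h0 x [] (k - int j))"
    using False by (intro sum.cong refl) (auto simp: fps_X_power_mult_nth h0_def nat_diff_distrib)
  finally show ?thesis .
qed (simp add: h0_def)

lemma hinf_esym: "hinf x y k = (\<Sum>j\<le>length y. (-1)^j * esym j y * hinf x [] (k - int j))"
proof (cases "k > int (length y) - int (length x)")
  case False
  let ?I = "inverse (X_minus_prod x)" and ?n = "length y" and ?m = "length x"
  define N where "N = nat (int ?n - int ?m - k)"
  have "hinf x y k = fps_nth (X_minus_prod y * ?I) N" using False by (simp add: hinf_def N_def)
  also have "\<dots> = (\<Sum>j\<le>?n. fps_nth (fps_const ((-1)^j * esym j y) * (fps_X^(?n - j) * ?I)) N)"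
    by (simp add: X_minus_prod_esym sum_distrib_right fps_sum_nth mult.assoc)
  also have "\<dots> = (\<Sum>j\<le>?n. (-1)^j * esym j y * hinf x [] (k - int j))"
  proof (intro sum.cong refl)
    fix j assume j: "j \<in> {..?n}"
    then have "(N < ?n - j) = (k - int j > - int ?m)" "N - (?n - j) = nat (0 - int ?m - (k - int j))"
      using False by (auto simp: N_def)
    then show "fps_nth (fps_const ((-1)^j * esym j y) * (fps_X^(?n - j) * ?I)) N
        = (-1)^j * esym j y * hinf x [] (k - int j)"
      by (simp add: fps_X_power_mult_nth hinf_def)
  qed
  finally show ?thesis .
qed (simp add: hinf_def)

lemma HH_esym: "HH x y k = (\<Sum>j\<le>length y. (-1)^j * esym j y * HH x [] (k - int j))"
  by (simp add: HH_def h0_esym[of x y] hinf_esym[of x y] right_diff_distrib sum_subtractf)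

lemma HH_Nil_left: "HH [] y k = 0"
proof -
  have Nil_Nil: "HH [] [] j = 0" for j :: int
    by (cases j "0 :: int" rule: linorder_cases) (simp_all add: HH_def h0_def hinf_def)
  show ?thesis by (subst HH_esym) (simp add: Nil_Nil)
qed

lemma HH_Nil_right_0:
  assumes "x \<noteq> []"
  shows "HH x [] 0 = 1"
proof -
  have "fps_nth (one_minus_prod x) 0 = 1" by (induct x) simp_all
  with assms show ?thesis by (simp add: HH_def h0_def hinf_def)
qed

lemma HH_Nil_right_neg: "- int (length x) < p \<Longrightarrow> p < 0 \<Longrightarrow> HH x [] p = 0"
  by (simp add: HH_def h0_def hinf_def)

section \<open>Partial fractions\<close>

text \<open>The Lagrange interpolation formula for the complete symmetric function h_k of the
  elements of S.\<close>

definition lagrange_sum :: "int \<Rightarrow> 'a::field set \<Rightarrow> 'a" where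
  "lagrange_sum k S = (\<Sum>u\<in>S. u powi (k + int (card S) - 1) / (\<Prod>v\<in>S - {u}. u - v))"

lemma lagrange_sum_remove:
  fixes S :: "'a::field set"
  assumes fin: "finite S" and aS: "a \<in> S" and nz: "0 \<notin> S"
  shows "lagrange_sum k S - a * lagrange_sum (k - 1) S = lagrange_sum k (S - {a})"
proof -
  define c where "c = int (card S)"
  have "card S > 0" using aS fin card_gt_0_iff by blast
  then have card_remove: "int (card (S - {a})) = c - 1" using aS fin by (simp add: c_def of_nat_diff)
  let ?P = "\<lambda>T u. \<Prod>v\<in>T - {u}. u - v"
  have "lagrange_sum k S - a * lagrange_sum (k - 1) S
      = (\<Sum>u\<in>S. (u powi (k + c - 1) - a * u powi (k - 1 + c - 1)) / ?P S u)"
    unfolding lagrange_sum_def c_def[symmetric]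
    by (simp add: sum_subtractf sum_distrib_left diff_divide_distrib)
  also have "\<dots> = (\<Sum>u\<in>S. u powi (k + c - 2) * (u - a) / ?P S u)"
  proof (intro sum.cong refl)
    fix u assume "u \<in> S"
    then have "u \<noteq> 0" using nz by auto
    then have "u powi (k + c - 1) = u powi (k + c - 2) * u"
      using power_int_minus_mult[of u "k + c - 1"] by (simp add: algebra_simps)
    then show "(u powi (k + c - 1) - a * u powi (k - 1 + c - 1)) / ?P S u
        = u powi (k + c - 2) * (u - a) / ?P S u"
      by (simp add: algebra_simps)
  qed
  also have "\<dots> = (\<Sum>u\<in>S - {a}. u powi (k + c - 2) * (u - a) / ?P S u)"
    using aS fin by (subst sum.remove[of S a]) auto
  also have "\<dots> = (\<Sum>u\<in>S - {a}. u powi (k + (c - 1) - 1) / ?P (S - {a}) u)"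
  proof (intro sum.cong refl)
    fix u assume u: "u \<in> S - {a}"
    have "S - {u} = insert a (S - {a} - {u})" using u aS by auto
    then have "?P S u = (u - a) * ?P (S - {a}) u" using fin by (simp only: prod.insert) auto
    moreover have "u - a \<noteq> 0" using u by auto
    moreover have "k + (c - 1) - 1 = k + c - 2" by simp
    ultimately show "u powi (k + c - 2) * (u - a) / ?P S u = u powi (k + (c - 1) - 1) / ?P (S - {a}) u"
      by (simp only:) simp
  qed
  also have "\<dots> = lagrange_sum k (S - {a})" unfolding lagrange_sum_def card_remove ..
  finally show ?thesis .
qed

lemma first_order_recurrence_vanishes:
  fixes f :: "int \<Rightarrow> 'a::field"
  assumes rec: "\<And>k. f k = a * f (k - 1)" and "a \<noteq> 0" and "f 0 = 0"
  shows "f k = 0"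
proof (induction k rule: int_induct[where k = 0])
  case (step1 i) then show ?case using rec[of "i + 1"] by simp
next
  case (step2 i) then show ?case using rec[of i] \<open>a \<noteq> 0\<close> by simp
qed (fact \<open>f 0 = 0\<close>)

lemma HH_swap: "HH (a # b # r) y k = HH (b # a # r) y k"
  by (simp add: HH_def h0_def hinf_def mult.left_commute)

lemma HH_Nil_right_minus_lagrange_sum_Cons:
  assumes "distinct (a # x)" and "0 \<notin> set (a # x)"
    and IH: "\<And>k. HH x [] k = lagrange_sum k (set x)"
  shows "HH (a # x) [] k - lagrange_sum k (set (a # x))
       = a * (HH (a # x) [] (k - 1) - lagrange_sum (k - 1) (set (a # x)))"
proof -
  have "HH (a # x) [] k - a * HH (a # x) [] (k - 1) = HH x [] k"
    using HH_Cons[of a x "[]" k] assms by auto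
  moreover have "lagrange_sum k (set (a # x)) - a * lagrange_sum (k - 1) (set (a # x))
      = lagrange_sum k (set (a # x) - {a})"
    using assms by (intro lagrange_sum_remove) auto
  moreover have "set (a # x) - {a} = set x" using assms by auto
  ultimately show ?thesis using IH[of k] by (simp add: algebra_simps)
qed

lemma HH_Nil_right_eq_lagrange_sum:
  fixes x :: "'a::field list"
  assumes "distinct x" and "0 \<notin> set x"
  shows "HH x [] k = lagrange_sum k (set x)"
  using assms
proof (induction "length x" arbitrary: x k rule: less_induct)
  case less
  show ?case
  proof (cases x)
    case Nil then show ?thesis by (simp add: HH_Nil_left lagrange_sum_def)
  next
    case (Cons a x')
    define D where "D k = HH x [] k - lagrange_sum k (set x)" for k
    have IH: "HH z [] k = lagrange_sum k (set z)" if "length z < length x" "set z \<subseteq> set x"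
      "distinct z" for z k
      using that less.prems by (intro less.hyps) auto
    have rec_a: "D k = a * D (k - 1)" for k
      unfolding D_def Cons using less.prems Cons IH[of x']
      by (intro HH_Nil_right_minus_lagrange_sum_Cons) auto
    have "D k = 0" for k
    proof (cases x')
      case Nil
      have "a \<noteq> 0" using less.prems Cons by auto
      moreover have "D 0 = 0" by (simp add: D_def Cons Nil HH_def h0_def hinf_def lagrange_sum_def)
      ultimately show ?thesis by (rule first_order_recurrence_vanishes[of D a, OF rec_a])
    next
      case (Cons b r)
      \<comment> \<open>the defect obeys the recurrence for both leading variables a and b, which differ\<close>
      have swap: "D k = HH (b # a # r) [] k - lagrange_sum k (set (b # a # r))" for k
        by (simp add: D_def \<open>x = a # x'\<close> Cons HH_swap insert_commute)
      have rec_b: "D k = b * D (k - 1)" for k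
        unfolding swap using less.prems \<open>x = a # x'\<close> Cons IH[of "a # r"]
        by (intro HH_Nil_right_minus_lagrange_sum_Cons) auto
      have "a \<noteq> b" using less.prems \<open>x = a # x'\<close> Cons by auto
      then show ?thesis using rec_a[of "k + 1"] rec_b[of "k + 1"] by simp
    qed
    then show ?thesis by (simp add: D_def)
  qed
qed

definition lagrange_weight :: "'a::field list \<Rightarrow> nat \<Rightarrow> 'a" where
  "lagrange_weight x a = 1 / (\<Prod>b\<in>{..<length x} - {a}. x ! a - x ! b)"

definition y_factor :: "'a::field list \<Rightarrow> 'a \<Rightarrow> 'a" where
  "y_factor y u = (\<Prod>j<length y. 1 - y ! j / u)"

lemma y_factor_Nil [simp]: "y_factor [] u = 1"
  by (simp add: y_factor_def)

lemma lagrange_sum_set_conv_nth: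
  fixes x :: "'a::field list"
  assumes "distinct x"
  shows "lagrange_sum k (set x)
       = (\<Sum>a<length x. x ! a powi (k + int (length x) - 1) * lagrange_weight x a)"
proof -
  have inj: "inj_on ((!) x) {..<length x}" using assms by (simp add: inj_on_nth)
  have "(\<Prod>v\<in>set x - {x ! a}. x ! a - v) = (\<Prod>b\<in>{..<length x} - {a}. x ! a - x ! b)"
    if "a < length x" for a
  proof -
    have "set x - {x ! a} = (!) x ` ({..<length x} - {a})"
      using that assms by (auto simp: in_set_conv_nth nth_eq_iff_index_eq)
    moreover have "inj_on ((!) x) ({..<length x} - {a})" using inj by (rule inj_on_subset) auto
    ultimately show ?thesis by (simp add: prod.reindex)
  qed
  moreover have "set x = (!) x ` {..<length x}" by (auto simp: in_set_conv_nth)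
  ultimately show ?thesis
    unfolding lagrange_sum_def distinct_card[OF assms]
    by (simp add: sum.reindex[OF inj] lagrange_weight_def)
qed

lemma HH_eq_weighted_power_sum:
  fixes x y :: "'a::field list"
  assumes d: "distinct x" and nz: "0 \<notin> set x"
  shows "HH x y k = (\<Sum>a<length x.
           y_factor y (x ! a) * x ! a powi (k + int (length x) - 1) * lagrange_weight x a)"
proof -
  let ?m = "int (length x)"
  have "HH x y k = (\<Sum>j\<le>length y. \<Sum>a<length x.
          (-1)^j * esym j y * (x ! a powi (k - int j + ?m - 1) * lagrange_weight x a))"
    by (simp add: HH_esym[of x y] HH_Nil_right_eq_lagrange_sum[OF d nz]
        lagrange_sum_set_conv_nth[OF d] sum_distrib_left)
  also have "\<dots> = (\<Sum>a<length x. \<Sum>j\<le>length y.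
          (-1)^j * esym j y * (x ! a powi (k - int j + ?m - 1) * lagrange_weight x a))"
    by (rule sum.swap)
  also have "\<dots> = (\<Sum>a<length x.
          y_factor y (x ! a) * x ! a powi (k + ?m - 1) * lagrange_weight x a)"
  proof (intro sum.cong refl)
    fix a assume "a \<in> {..<length x}"
    then have "x ! a \<noteq> 0" using nz by (auto dest: nth_mem)
    then have "x ! a powi (k - int j + ?m - 1) = x ! a powi (k + ?m - 1) * inverse (x ! a) ^ j"
      for j
      using power_int_add[of "x ! a" "k + ?m - 1" "- int j"]
      by (simp add: power_int_minus power_inverse algebra_simps)
    then show "(\<Sum>j\<le>length y. (-1)^j * esym j y * (x ! a powi (k - int j + ?m - 1) * lagrange_weight x a))
        = y_factor y (x ! a) * x ! a powi (k + ?m - 1) * lagrange_weight x a"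
      by (simp add: y_factor_def prod_one_minus_div_esym sum_distrib_left ac_simps)
  qed
  finally show ?thesis .
qed

section \<open>Determinants\<close>

lemma mat_mult_mat_eq: "mat m k f * mat k n g = mat m n (\<lambda>(i, j). \<Sum>l<k. f (i, l) * g (l, j))"
  by (rule eq_matI) (auto simp: scalar_prod_def row_def col_def atLeast0LessThan intro!: sum.cong)

lemma det_mat_leibniz:
  "det (mat n n f) = (\<Sum>p | p permutes {..<n}. of_int (sign p) * (\<Prod>i<n. f (i, p i)))"
proof -
  have "(\<Prod>i<n. mat n n f $$ (i, p i)) = (\<Prod>i<n. f (i, p i))" if "p permutes {..<n}" for p
    using permutes_in_image[OF that] by (intro prod.cong) auto
  then show ?thesis by (simp add: det_def'[OF mat_carrier] atLeast0LessThan)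
qed

lemma det_mat_scale_rows:
  "det (mat n n (\<lambda>(i, j). r i * f (i, j))) = (\<Prod>i<n. r i) * det (mat n n f)"
  unfolding det_mat_leibniz by (simp add: sum_distrib_left prod.distrib ac_simps)

lemma det_mat_scale_cols:
  "det (mat n n (\<lambda>(i, j). f (i, j) * c j)) = (\<Prod>j<n. c j) * det (mat n n f)"
  unfolding det_mat_leibniz
proof (simp add: sum_distrib_left, intro sum.cong refl)
  fix p assume "p \<in> {p. p permutes {..<n}}"
  then have "(\<Prod>i<n. c (p i)) = (\<Prod>j<n. c j)"
    by (intro prod.reindex_bij_betw permutes_imp_bij) auto
  then show "of_int (sign p) * (\<Prod>i<n. f (i, p i) * c (p i))
      = (\<Prod>j<n. c j) * (of_int (sign p) * (\<Prod>i<n. f (i, p i)))"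
    by (simp add: prod.distrib ac_simps)
qed

lemma det_unit_bidiagonal:
  "det (mat n n (\<lambda>(i, l). (if l = i then 1 else 0) + (if l = Suc i then c else 0))) = (1 :: 'a::comm_ring_1)"
proof -
  let ?E = "mat n n (\<lambda>(i, l). (if l = i then 1 else 0) + (if l = Suc i then c else 0)) :: 'a mat"
  have "upper_triangular ?E" by (rule upper_triangularI) auto
  moreover have "diag_mat ?E = replicate n 1" by (rule nth_equalityI) (auto simp: diag_mat_def)
  ultimately show ?thesis using det_upper_triangular[of ?E n] by simp
qed

definition vandermonde_mat :: "'a::field list \<Rightarrow> 'a mat" where
  "vandermonde_mat x = mat (length x) (length x) (\<lambda>(i, a). x ! a ^ (length x - 1 - i))"

lemma vdm_Cons: "vdm (a # x) = (\<Prod>j<length x. a - x ! j) * vdm x"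
proof -
  have shift: "(\<Prod>j\<in>{Suc i<..<Suc m}. g j) = (\<Prod>j\<in>{i<..<m}. g (Suc j))" for i m and g :: "nat \<Rightarrow> 'a"
    unfolding atLeastSucLessThan_greaterThanLessThan[symmetric] by (rule prod.shift_bounds_Suc_ivl)
  have "vdm (a # x) = (\<Prod>j\<in>{0<..<Suc (length x)}. a - (a # x) ! j) *
      (\<Prod>i<length x. \<Prod>j\<in>{Suc i<..<Suc (length x)}. x ! i - (a # x) ! j)"
    unfolding vdm_def by (simp add: prod.lessThan_Suc_shift del: prod.lessThan_Suc)
  also have "\<dots> = (\<Prod>j<length x. a - x ! j) * vdm x"
    unfolding shift atLeastSucLessThan_greaterThanLessThan[symmetric, of 0]
    unfolding prod.shift_bounds_Suc_ivl vdm_def by (simp add: atLeast0LessThan)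
  finally show ?thesis .
qed

lemma vdm_eq_0_iff: "vdm x = 0 \<longleftrightarrow> \<not> distinct x"
proof
  assume "\<not> distinct x"
  then obtain i j where ij: "i < j" "j < length x" "x ! i = x ! j"
    by (metis distinct_conv_nth linorder_neqE_nat)
  then have "(\<Prod>j\<in>{i<..<length x}. x ! i - x ! j) = 0" by (intro prod_zero bexI[of _ j]) auto
  then show "vdm x = 0"
    unfolding vdm_def by (rule prod_zero[OF finite_lessThan bexI[of _ i]]) (use ij in auto)
qed (auto simp: vdm_def nth_eq_iff_index_eq)

text \<open>Subtracting a times the next row from each row of the Vandermonde matrix of a # x
  leaves a matrix whose first column is the last unit vector and whose remaining minor is the
  Vandermonde matrix of x with columns scaled by x ! j - a.\<close>

lemma vandermonde_mat_Cons_reduce: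
  fixes x :: "'a::field list"
  defines "m \<equiv> Suc (length x)"
  shows "mat m m (\<lambda>(i, l). (if l = i then 1 else 0) + (if l = Suc i then - a else 0)) * vandermonde_mat (a # x)
       = mat m m (\<lambda>(i, c). (a # x) ! c ^ (m - 1 - i)
                    - (if Suc i < m then a * (a # x) ! c ^ (m - 1 - Suc i) else 0))"
proof -
  have row_op: "(\<Sum>l<m. ((if l = i then 1 else 0) + (if l = Suc i then - a else 0)) * g l)
      = g i - (if Suc i < m then a * g (Suc i) else 0)" if "i < m" for i g
    using that by (simp add: distrib_right sum.distrib if_distrib[of "\<lambda>t. t * g _"] cong: if_cong)
  have V: "vandermonde_mat (a # x) = mat m m (\<lambda>(i, c). (a # x) ! c ^ (m - 1 - i))"
    by (simp add: vandermonde_mat_def m_def)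
  show ?thesis
    unfolding V mat_mult_mat_eq by (intro eq_matI) (auto simp: row_op)
qed

lemma det_vandermonde_mat: "det (vandermonde_mat x) = vdm x"
proof (induction x)
  case Nil
  show ?case by (simp add: vandermonde_mat_def vdm_def)
next
  case (Cons a x)
  define m' where "m' = length x"
  define m where "m = Suc m'"
  define E :: "'a mat" where
    "E = mat m m (\<lambda>(i, l). (if l = i then 1 else 0) + (if l = Suc i then - a else 0))"
  define W where "W = mat m m (\<lambda>(i, c). (a # x) ! c ^ (m - 1 - i)
      - (if Suc i < m then a * (a # x) ! c ^ (m - 1 - Suc i) else 0))"
  have EV: "E * vandermonde_mat (a # x) = W"
    unfolding E_def W_def m_def m'_def by (rule vandermonde_mat_Cons_reduce)
  have col0: "W $$ (i, 0) = (if i = m' then 1 else 0)" if "i < m" for i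
  proof (cases "i = m'")
    case False
    with that have "m' - i = Suc (m' - Suc i)" by (simp add: m_def)
    with that False show ?thesis by (simp add: W_def m_def)
  qed (use that in \<open>simp add: W_def m_def\<close>)
  have minor: "mat_delete W m' 0 = mat m' m' (\<lambda>(i, j). x ! j ^ (m' - 1 - i) * (x ! j - a))"
  proof (rule eq_matI, goal_cases)
    case (1 i j)
    then have ij: "i < m'" "j < m'" by auto
    then obtain q where "m' - i = Suc q" "m' - Suc i = q" "m' - 1 - i = q"
      by (metis Suc_diff_Suc diff_Suc_1 diff_diff_left plus_1_eq_Suc)
    then show ?case using ij by (simp add: mat_delete_def W_def m_def algebra_simps)
  qed (auto simp: mat_delete_def W_def m_def)
  have "det W = (\<Sum>i<m. W $$ (i, 0) * cofactor W i 0)"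
    by (rule laplace_expansion_column) (auto simp: W_def m_def)
  also have "\<dots> = (-1)^m' * det (mat_delete W m' 0)"
    by (simp add: col0 m_def cofactor_def if_distrib[of "\<lambda>t. t * _"] cong: if_cong)
  also have "\<dots> = (-1)^m' * ((\<Prod>j<m'. x ! j - a) * vdm x)"
    unfolding minor
    using det_mat_scale_cols[of m' "\<lambda>(i, j). x ! j ^ (m' - 1 - i)" "\<lambda>j. x ! j - a"] Cons.IH
    by (simp add: vandermonde_mat_def m'_def)
  also have "\<dots> = vdm (a # x)" by (simp add: vdm_Cons prod_diff_swap[of "\<lambda>_. a"] m'_def)
  finally have "det W = vdm (a # x)" .
  moreover have "det (E * vandermonde_mat (a # x)) = det E * det (vandermonde_mat (a # x))"
    by (rule det_mult[of _ m]) (auto simp: E_def vandermonde_mat_def m_def m'_def)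
  ultimately show ?case using EV det_unit_bidiagonal[of m "- a"] by (simp add: E_def)
qed

definition lagrange_mat :: "'a::field list \<Rightarrow> 'a list \<Rightarrow> 'a mat" where
  "lagrange_mat x y = mat (length x) (length x)
     (\<lambda>(a, j). y_factor y (x ! a) * lagrange_weight x a * x ! a ^ j)"

definition top_row_mat :: "'a::field list \<Rightarrow> 'a list \<Rightarrow> int \<Rightarrow> 'a mat" where
  "top_row_mat x y k = mat (length x) (length x) (\<lambda>(i, a).
     if i = 0 then y_factor y (x ! a) * x ! a powi (k + int (length x) - 1)
     else x ! a ^ (length x - 1 - i))"

lemma weighted_power_sum_eq_HH:
  fixes x y :: "'a::field list"
  assumes "distinct x" and nz: "0 \<notin> set x"
  shows "(\<Sum>a<length x. y_factor y (x ! a) * x ! a powi e * (lagrange_weight x a * x ! a ^ j))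
       = HH x y (e + int j - int (length x) + 1)"
proof -
  have "x ! a powi (e + int j) = x ! a powi e * x ! a ^ j" if "a < length x" for a
  proof -
    have "x ! a \<noteq> 0" using that nz by (auto dest: nth_mem)
    then show ?thesis by (simp add: power_int_add)
  qed
  then show ?thesis
    by (simp add: HH_eq_weighted_power_sum[OF assms] ac_simps)
qed

lemma powi_mat_mult_lagrange_mat:
  fixes x y :: "'a::field list"
  assumes "distinct x" and "0 \<notin> set x"
  shows "mat p (length x) (\<lambda>(i, a). x ! a powi e i) * lagrange_mat x y
       = mat p (length x) (\<lambda>(i, j). HH x y (e i + int j - int (length x) + 1))"
  unfolding lagrange_mat_def mat_mult_mat_eq
proof (rule eq_matI, goal_cases)
  case (1 i j)
  then show ?case using weighted_power_sum_eq_HH[OF assms, of y "e i" j] by (simp add: ac_simps)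
qed auto

lemma top_row_mat_mult_lagrange_mat:
  fixes x y :: "'a::field list"
  assumes "distinct x" and "0 \<notin> set x"
  shows "top_row_mat x y k * lagrange_mat x []
       = mat (length x) (length x) (\<lambda>(i, j). if i = 0 then HH x y (k + int j) else HH x [] (int j - int i))"
  unfolding top_row_mat_def lagrange_mat_def mat_mult_mat_eq
proof (rule eq_matI, goal_cases)
  let ?m = "length x"
  case (1 i j)
  then have ij: "i < ?m" "j < ?m" by auto
  have top: "(\<Sum>a<?m. y_factor y (x ! a) * x ! a powi (k + int ?m - 1) * (lagrange_weight x a * x ! a ^ j))
      = HH x y (k + int j)"
    using weighted_power_sum_eq_HH[OF assms, of y "k + int ?m - 1" j] by simp
  have lower: "(\<Sum>a<?m. x ! a ^ (?m - 1 - i) * (lagrange_weight x a * x ! a ^ j)) = HH x [] (int j - int i)"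
    using weighted_power_sum_eq_HH[OF assms, of "[]" "int (?m - 1 - i)" j] ij
    by (simp only: y_factor_Nil power_int_of_nat mult_1_left) (simp add: of_nat_diff)
  show ?case using ij top lower by (simp add: ac_simps)
qed auto

lemma det_top_row_mat_mult_lagrange_mat:
  fixes x y :: "'a::field list"
  assumes "distinct x" and "0 \<notin> set x" and "x \<noteq> []"
  shows "det (top_row_mat x y k) * det (lagrange_mat x []) = HH x y k"
proof -
  let ?m = "length x"
  let ?T = "mat ?m ?m (\<lambda>(i, j). if i = 0 then HH x y (k + int j) else HH x [] (int j - int i))"
  have "upper_triangular ?T"
    by (rule upper_triangularI) (auto intro!: HH_Nil_right_neg)
  moreover have "diag_mat ?T = HH x y k # replicate (?m - 1) 1"
    using assms(3) by (intro nth_equalityI) (auto simp: diag_mat_def nth_Cons' HH_Nil_right_0)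
  ultimately have "det ?T = HH x y k" using det_upper_triangular[of ?T ?m] by simp
  moreover have "det (top_row_mat x y k * lagrange_mat x []) = det (top_row_mat x y k) * det (lagrange_mat x [])"
    by (rule det_mult[of _ ?m]) (auto simp: top_row_mat_def lagrange_mat_def)
  ultimately show ?thesis by (simp add: top_row_mat_mult_lagrange_mat[OF assms(1,2)])
qed

lemma det_lagrange_mat:
  fixes x y :: "'a::field list"
  assumes "distinct x" and "0 \<notin> set x"
  shows "det (lagrange_mat x y) = (\<Prod>a<length x. y_factor y (x ! a)) / vdm x"
proof -
  have "vdm x \<noteq> 0" using assms(1) by (simp add: vdm_eq_0_iff)
  moreover have "det (lagrange_mat x []) * vdm x = 1"
  proof (cases "x = []")
    case False
    have exp: "u powi (int (length x) - 1) = u ^ (length x - 1)" for u :: 'a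
      using False by (cases x) auto
    have "top_row_mat x [] 0 = vandermonde_mat x"
      by (intro eq_matI) (auto simp: top_row_mat_def vandermonde_mat_def exp)
    then show ?thesis
      using det_top_row_mat_mult_lagrange_mat[OF assms False, of "[]" 0]
      by (simp add: det_vandermonde_mat HH_Nil_right_0[OF False] mult.commute)
  qed (simp add: lagrange_mat_def vdm_def det_mat_leibniz)
  moreover have "det (lagrange_mat x y) = (\<Prod>a<length x. y_factor y (x ! a)) * det (lagrange_mat x [])"
    unfolding lagrange_mat_def
    using det_mat_scale_rows[of "length x" "\<lambda>a. y_factor y (x ! a)" "\<lambda>(a, j). lagrange_weight x a * x ! a ^ j"]
    by (simp add: mult.assoc)
  ultimately show ?thesis by (simp add: field_simps)
qed

lemma det_HH_shifted_mat:
  fixes x y :: "'a::field list"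
  assumes d: "distinct x" and nz: "0 \<notin> set x"
  shows "det (mat (length x) (length x) (\<lambda>(i, j). HH x y (lam ! i - int i + int j)))
       = (\<Prod>i<length x. \<Prod>j<length y. 1 - y ! j / x ! i) * Elam lam x"
proof -
  let ?m = "length x"
  define A where "A = mat ?m ?m (\<lambda>(i, a). x ! a powi (lam ! i + int ?m - 1 - int i))"
  have "A * lagrange_mat x y = mat ?m ?m (\<lambda>(i, j). HH x y (lam ! i - int i + int j))"
    unfolding A_def powi_mat_mult_lagrange_mat[OF d nz] by (intro eq_matI) (simp_all add: algebra_simps)
  moreover have "det A = alt lam x" by (simp add: A_def det_mat_leibniz alt_def)
  moreover have "det (A * lagrange_mat x y) = det A * det (lagrange_mat x y)"
    by (rule det_mult[of _ ?m]) (auto simp: A_def lagrange_mat_def)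
  ultimately show ?thesis
    by (simp add: det_lagrange_mat[OF d nz] Elam_def y_factor_def)
qed

lemma det_top_row_mat_leibniz:
  fixes x y :: "'a::field list"
  assumes nz: "0 \<notin> set x" and ne: "x \<noteq> []"
  shows "det (top_row_mat x y k) = (\<Sum>\<sigma> | \<sigma> permutes {..<length x}. of_int (sign \<sigma>) *
     (y_factor y (x ! \<sigma> 0) * x ! \<sigma> 0 powi k * (\<Prod>i<length x. x ! \<sigma> i ^ (length x - 1 - i))))"
  unfolding top_row_mat_def det_mat_leibniz
proof (intro sum.cong refl)
  fix \<sigma> assume "\<sigma> \<in> {\<sigma>. \<sigma> permutes {..<length x}}"
  then have "x ! \<sigma> 0 \<noteq> 0"
    using nz ne permutes_in_image[of \<sigma> "{..<length x}" 0] by (auto dest: nth_mem)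
  moreover obtain m' where m: "length x = Suc m'" using ne by (cases x) auto
  ultimately have "x ! \<sigma> 0 powi (k + int (length x) - 1) = x ! \<sigma> 0 powi k * x ! \<sigma> 0 ^ (length x - 1)"
    by (simp add: power_int_add)
  then show "of_int (sign \<sigma>) * (\<Prod>i<length x. case (i, \<sigma> i) of (i, a) \<Rightarrow>
        if i = 0 then y_factor y (x ! a) * x ! a powi (k + int (length x) - 1) else x ! a ^ (length x - 1 - i))
      = of_int (sign \<sigma>) *
        (y_factor y (x ! \<sigma> 0) * x ! \<sigma> 0 powi k * (\<Prod>i<length x. x ! \<sigma> i ^ (length x - 1 - i)))"
    unfolding m by (simp add: prod.lessThan_Suc_shift del: prod.lessThan_Suc)
qed

lemma det_top_row_mat:
  fixes x y :: "'a::field list"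
  assumes nz: "0 \<notin> set x" and ne: "x \<noteq> []"
  shows "det (top_row_mat x y k) = HH x y k * vdm x"
proof (cases "distinct x")
  case True
  then show ?thesis
    using det_top_row_mat_mult_lagrange_mat[OF True nz ne, of y k] det_lagrange_mat[OF True nz, of "[]"]
      vdm_eq_0_iff[of x] by (simp add: field_simps)
next
  case False
  then obtain i j where ij: "i < j" "j < length x" "x ! i = x ! j"
    by (metis distinct_conv_nth linorder_neqE_nat)
  have "det (top_row_mat x y k) = 0"
    by (rule det_identical_columns[of _ "length x" i j])
      (use ij in \<open>auto simp: top_row_mat_def intro!: eq_vecI\<close>)
  with False show ?thesis by (simp add: vdm_eq_0_iff)
qed

lemma HH_vdm_vdm_eq_sum_permutations:
  fixes x y :: "'a::field list"
  assumes nz: "0 \<notin> set x" and ne: "x \<noteq> []"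
  shows "HH x y k * vdm x * vdm y =
        (\<Sum>\<sigma> | \<sigma> permutes {..<length x}. \<Sum>\<tau> | \<tau> permutes {..<length y}.
           of_int (sign \<sigma>) * of_int (sign \<tau>) *
           ((\<Prod>j<length y. 1 - y ! (\<tau> j) / x ! (\<sigma> 0)) * (x ! (\<sigma> 0)) powi k *
            (\<Prod>i<length x. (x ! (\<sigma> i)) ^ (length x - 1 - i)) *
            (\<Prod>j<length y. (y ! (\<tau> j)) ^ (length y - 1 - j))))" (is "_ = ?rhs")
proof -
  have y_factor_perm: "(\<Prod>j<length y. 1 - y ! (\<tau> j) / u) = y_factor y u"
    if "\<tau> permutes {..<length y}" for \<tau> u
    unfolding y_factor_def
    using prod.reindex_bij_betw[OF permutes_imp_bij[OF that], of "\<lambda>j. 1 - y ! j / u"] by simp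
  have "HH x y k * vdm x * vdm y = det (top_row_mat x y k) * det (vandermonde_mat y)"
    by (simp add: det_top_row_mat[OF nz ne] det_vandermonde_mat)
  also have "\<dots> = ?rhs"
    unfolding det_top_row_mat_leibniz[OF nz ne] vandermonde_mat_def det_mat_leibniz sum_product
    by (intro sum.cong refl) (simp add: y_factor_perm ac_simps)
  finally show ?thesis .
qed

text \<open>The coefficient of t^j in the product of the t - a over a in z.\<close>

fun linear_factors_coeff :: "'a::field list \<Rightarrow> nat \<Rightarrow> 'a" where
  "linear_factors_coeff [] j = (if j = 0 then 1 else 0)"
| "linear_factors_coeff (a # z) j =
     (if j = 0 then 0 else linear_factors_coeff z (j - 1)) - a * linear_factors_coeff z j"

lemma linear_factors_coeff_above: "length z < j \<Longrightarrow> linear_factors_coeff z j = 0"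
  by (induct z arbitrary: j) auto

lemma linear_factors_coeff_length: "linear_factors_coeff z (length z) = 1"
  by (induct z) (auto simp: linear_factors_coeff_above)

lemma linear_factors_coeff_sum_HH:
  assumes "0 \<notin> set z"
  shows "(\<Sum>j\<le>length z. linear_factors_coeff z j * HH (z @ x) y (p + int j)) = HH x y (p + int (length z))"
  using assms
proof (induction z arbitrary: p)
  case (Cons a z)
  let ?n = "length z" and ?c = "linear_factors_coeff z" and ?H = "HH (a # z @ x) y"
  have "(\<Sum>j\<le>Suc ?n. linear_factors_coeff (a # z) j * ?H (p + int j))
      = (\<Sum>j\<le>Suc ?n. (if j = 0 then 0 else ?c (j - 1)) * ?H (p + int j)) - a * (\<Sum>j\<le>Suc ?n. ?c j * ?H (p + int j))"
    by (simp add: sum_subtractf sum_distrib_left algebra_simps)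
  also have "(\<Sum>j\<le>Suc ?n. (if j = 0 then 0 else ?c (j - 1)) * ?H (p + int j))
      = (\<Sum>j\<le>?n. ?c j * ?H (p + 1 + int j))"
    by (subst sum.atMost_Suc_shift) (simp add: algebra_simps)
  also have "(\<Sum>j\<le>Suc ?n. ?c j * ?H (p + int j)) = (\<Sum>j\<le>?n. ?c j * ?H (p + 1 + int j - 1))"
    by (simp add: linear_factors_coeff_above)
  also have "(\<Sum>j\<le>?n. ?c j * ?H (p + 1 + int j)) - a * (\<Sum>j\<le>?n. ?c j * ?H (p + 1 + int j - 1))
      = (\<Sum>j\<le>?n. ?c j * (?H (p + 1 + int j) - a * ?H (p + 1 + int j - 1)))"
    by (simp add: sum_subtractf sum_distrib_left algebra_simps)
  also have "\<dots> = (\<Sum>j\<le>?n. ?c j * HH (z @ x) y (p + 1 + int j))"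
    using Cons.prems HH_Cons[of a "z @ x" y "p + 1 + int _"] by (intro sum.cong refl) simp
  also have "\<dots> = HH x y (p + 1 + int ?n)" using Cons by simp
  finally show ?case by (simp add: algebra_simps)
qed simp

lemma det_HH_shifted_mat_Suc:
  fixes x y :: "'a::field list"
  assumes nz: "0 \<notin> set x"
  shows "det (mat (length x + 1) (length x + 1) (\<lambda>(i, j). HH x y (lam ! i - int i + int j))) = 0"
proof -
  let ?n = "length x + 1"
  let ?M = "mat ?n ?n (\<lambda>(i, j). HH x y (lam ! i - int i + int j))"
  define v where "v = vec ?n (linear_factors_coeff x)"
  have "v \<noteq> 0\<^sub>v ?n"
  proof
    assume "v = 0\<^sub>v ?n"
    then have "v $ length x = 0" by simp
    then show False by (simp add: v_def linear_factors_coeff_length)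
  qed
  moreover have "?M *\<^sub>v v = 0\<^sub>v ?n"
  proof (rule eq_vecI)
    fix i assume "i < dim_vec (0\<^sub>v ?n :: 'a vec)"
    then have "(?M *\<^sub>v v) $ i = (\<Sum>j\<le>length x. linear_factors_coeff x j * HH (x @ []) y ((lam ! i - int i) + int j))"
      by (simp add: v_def scalar_prod_def atLeast0LessThan lessThan_Suc_atMost mult.commute)
    also have "\<dots> = HH [] y (lam ! i - int i + int (length x))"
      using nz by (rule linear_factors_coeff_sum_HH)
    finally show "(?M *\<^sub>v v) $ i = 0\<^sub>v ?n $ i" using \<open>i < dim_vec _\<close> by (simp add: HH_Nil_left)
  qed simp
  ultimately have "\<exists>v. v \<in> carrier_vec ?n \<and> v \<noteq> 0\<^sub>v ?n \<and> ?M *\<^sub>v v = 0\<^sub>v ?n"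
    by (intro exI[of _ v]) (simp add: v_def)
  then show ?thesis using det_0_iff_vec_prod_zero_field[of ?M ?n] by simp
qed

theorem mainTheorem7:
  fixes x y :: "'a::field list"
  assumes nz: "\<forall>a\<in>set x. a \<noteq> 0"
  shows
   "(\<forall>k::int. HH x y k = (\<Sum>j\<le>length y. (-1)^j * esym j y * HH x [] (k - int j)))
  \<and> (length x \<ge> 1 \<longrightarrow> (\<forall>k::int.
        HH x y k * vdm x * vdm y =
        (\<Sum>\<sigma> | \<sigma> permutes {..<length x}. \<Sum>\<tau> | \<tau> permutes {..<length y}.
           of_int (sign \<sigma>) * of_int (sign \<tau>) *
           ((\<Prod>j<length y. 1 - y ! (\<tau> j) / x ! (\<sigma> 0)) * (x ! (\<sigma> 0)) powi k *
            (\<Prod>i<length x. (x ! (\<sigma> i)) ^ (length x - 1 - i)) *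
            (\<Prod>j<length y. (y ! (\<tau> j)) ^ (length y - 1 - j))))))
  \<and> (length x \<ge> 1 \<longrightarrow> (\<forall>k::int. HH x y k - x ! 0 * HH x y (k - 1) = HH (tl x) y k))
  \<and> (length x = 1 \<longrightarrow> (\<forall>k::int. HH x y k - x ! 0 * HH x y (k - 1) = 0))
  \<and> (distinct x \<longrightarrow> (\<forall>lam::int list. length lam = length x \<longrightarrow>
        det (mat (length x) (length x) (\<lambda>(i, j). HH x y (lam ! i - int i + int j))) =
        (\<Prod>i<length x. \<Prod>j<length y. 1 - y ! j / x ! i) * Elam lam x))
  \<and> (\<forall>lam::int list. length lam = length x + 1 \<longrightarrow>
        det (mat (length x + 1) (length x + 1) (\<lambda>(i, j). HH x y (lam ! i - int i + int j))) = 0)"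
proof -
  have nz': "0 \<notin> set x" using nz by auto
  have recurrence: "HH x y k - x ! 0 * HH x y (k - 1) = HH (tl x) y k" if "x \<noteq> []" for k
    using that nz HH_Cons[of "hd x" "tl x" y k] by (cases x) auto
  show ?thesis
  proof (intro conjI allI impI)
    fix k :: int assume "length x = 1"
    then have "x \<noteq> []" "tl x = []" by (cases x; simp)+
    then show "HH x y k - x ! 0 * HH x y (k - 1) = 0"
      using recurrence[of k] by (simp add: HH_Nil_left)
  qed (use HH_esym HH_vdm_vdm_eq_sum_permutations[OF nz'] recurrence det_HH_shifted_mat[OF _ nz']
      det_HH_shifted_mat_Suc[OF nz'] in \<open>simp_all add: Suc_le_eq\<close>)
qed

end
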